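(* For every integer $m\ge 2$ and every graph $G$, $\hom(S_0;G)\cdot\hom(S_{2,1^{m-2}};G)\ge \hom(S_{2,1^{m-1}};G)$.
   Context: All graphs are finite; $\hom(H;G)$ is the number of graph homomorphisms from $H$ to $G$ (maps $V(H)\to V(G)$ sending edges to edges). $S_0$ is the graph with one vertex and no edges. For $k\ge0$, $S_{2,1^k}$ is the tree with vertex set $\{1,\ldots,k+3\}$ and edge set $\{\{1,j\}:2\le j\le k+2\}\cup\{\{k+2,k+3\}\}$. *)

theory Defs
  imports "HOL-Library.FuncSet"
begin

definition graph :: "'a set \<Rightarrow> ('a \<Rightarrow> 'a \<Rightarrow> bool) \<Rightarrow> bool" where
  "graph V E \<longleftrightarrow> finite V \<and> (\<forall>x y. E x y \<longrightarrow> x \<in> V \<and> y \<in> V)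
      \<and> (\<forall>x y. E x y \<longrightarrow> E y x) \<and> (\<forall>x. \<not> E x x)"

definition hom_count :: "'b set \<Rightarrow> ('b \<Rightarrow> 'b \<Rightarrow> bool) \<Rightarrow> 'a set \<Rightarrow> ('a \<Rightarrow> 'a \<Rightarrow> bool) \<Rightarrow> nat" where
  "hom_count VH EH VG EG = card {f \<in> VH \<rightarrow>\<^sub>E VG. \<forall>x y. EH x y \<longrightarrow> EG (f x) (f y)}"

definition S0_V :: "nat set" where "S0_V = {1}"
definition S0_E :: "nat \<Rightarrow> nat \<Rightarrow> bool" where "S0_E x y = False"

definition S21_V :: "nat \<Rightarrow> nat set" where "S21_V k = {1..k+3}"
definition S21_edges :: "nat \<Rightarrow> nat set set" where
  "S21_edges k = {{1, j} | j. 2 \<le> j \<and> j \<le> k + 2} \<union> {{k + 2, k + 3}}"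
definition S21_E :: "nat \<Rightarrow> nat \<Rightarrow> nat \<Rightarrow> bool" where
  "S21_E k x y \<longleftrightarrow> x \<noteq> y \<and> {x, y} \<in> S21_edges k"

end

theory Submission
  imports Defs
begin

text \<open>Vertex 2 of S_{2,1^{k+1}} is a leaf at the centre 1, and deleting it leaves a copy
  of S_{2,1^k}. A homomorphism from S_{2,1^{k+1}} into G is therefore determined by its
  restriction to that copy, a homomorphism from S_{2,1^k}, together with the image of the
  leaf, one of the |V(G)| = hom(S_0;G) vertices.\<close>

lemma hom_count_singleton_no_edges:
  "hom_count {a} (\<lambda>_ _. False) V E = card V"
  by (simp add: hom_count_def card_PiE)

lemma hom_count_S0: "hom_count S0_V S0_E V E = card V"
  unfolding S0_V_def S0_E_def[abs_def] by (rule hom_count_singleton_no_edges)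

lemma hom_count_le_card_mult_hom_count_delete_vertex:
  fixes V :: "'a set" and VH :: "'b set" and VH' :: "'c set" and sig :: "'b \<Rightarrow> 'c"
  assumes "finite V" and "finite VH"
    and edges_in_VH: "\<And>x y. EH x y \<Longrightarrow> x \<in> VH \<and> y \<in> VH"
    and sig_hom: "\<And>x y. EH x y \<Longrightarrow> EH' (sig x) (sig y)"
    and sig_into: "sig ` VH \<subseteq> VH'"
    and v_in: "v \<in> VH'"
    and sig_covers: "VH' \<subseteq> insert v (sig ` VH)"
  shows "hom_count VH' EH' V E \<le> card V * hom_count VH EH V E"
proof -
  define A where "A = {f \<in> VH' \<rightarrow>\<^sub>E V. \<forall>x y. EH' x y \<longrightarrow> E (f x) (f y)}"
  define B where "B = {f \<in> VH \<rightarrow>\<^sub>E V. \<forall>x y. EH x y \<longrightarrow> E (f x) (f y)}"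
  define decompose where "decompose f = (f v, restrict (f \<circ> sig) VH)" for f :: "'c \<Rightarrow> 'a"
  have "finite B"
    unfolding B_def using assms(1,2) by (auto intro: finite_subset[OF _ finite_PiE])
  have "decompose ` A \<subseteq> V \<times> B"
  proof (rule image_subsetI)
    fix f assume "f \<in> A"
    then have f_PiE: "f \<in> VH' \<rightarrow>\<^sub>E V" and f_hom: "\<And>x y. EH' x y \<Longrightarrow> E (f x) (f y)"
      by (auto simp: A_def)
    have "restrict (f \<circ> sig) VH \<in> B"
      using f_PiE sig_into edges_in_VH f_hom[OF sig_hom] by (auto simp: B_def PiE_iff)
    then show "decompose f \<in> V \<times> B"
      using f_PiE v_in by (auto simp: decompose_def)
  qed
  moreover have "inj_on decompose A"
  proof
    fix f g assume "f \<in> A" "g \<in> A" and decompose_eq: "decompose f = decompose g"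
    then have f_PiE: "f \<in> VH' \<rightarrow>\<^sub>E V" and g_PiE: "g \<in> VH' \<rightarrow>\<^sub>E V"
      by (auto simp: A_def)
    show "f = g"
    proof (rule PiE_ext[OF f_PiE g_PiE])
      fix i assume "i \<in> VH'"
      with sig_covers consider "i = v" | j where "j \<in> VH" "i = sig j"
        by blast
      then show "f i = g i"
      proof cases
        case 1
        then show ?thesis using decompose_eq by (simp add: decompose_def)
      next
        case (2 j)
        then have "restrict (f \<circ> sig) VH j = restrict (g \<circ> sig) VH j"
          using decompose_eq by (simp add: decompose_def)
        then show ?thesis using 2 by simp
      qed
    qed
  qed
  ultimately have "card A \<le> card (V \<times> B)"
    using card_inj_on_le \<open>finite B\<close> \<open>finite V\<close> by blast
  then show ?thesis
    by (simp add: hom_count_def A_def[symmetric] B_def[symmetric] card_cartesian_product)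
qed

definition S21_shift :: "nat \<Rightarrow> nat" where
  "S21_shift j = (if j = 1 then 1 else j + 1)"

lemma S21_E_in_S21_V: "S21_E k x y \<Longrightarrow> x \<in> S21_V k \<and> y \<in> S21_V k"
  by (auto simp: S21_E_def S21_edges_def S21_V_def doubleton_eq_iff)

lemma S21_E_shift: "S21_E k x y \<Longrightarrow> S21_E (Suc k) (S21_shift x) (S21_shift y)"
  by (auto simp: S21_E_def S21_edges_def S21_shift_def doubleton_eq_iff)

lemma S21_V_Suc_eq: "S21_V (Suc k) = insert 2 (S21_shift ` S21_V k)"
proof -
  have "i \<in> S21_shift ` S21_V k" if "i \<in> S21_V (Suc k)" "i \<noteq> 2" for i
    using that by (intro image_eqI[of _ _ "if i = 1 then 1 else i - 1"])
      (auto simp: S21_shift_def S21_V_def)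
  moreover have "insert 2 (S21_shift ` S21_V k) \<subseteq> S21_V (Suc k)"
    by (auto simp: S21_shift_def S21_V_def)
  ultimately show ?thesis
    by blast
qed

lemma hom_count_S21_Suc_le:
  assumes "finite V"
  shows "hom_count (S21_V (Suc k)) (S21_E (Suc k)) V E \<le> card V * hom_count (S21_V k) (S21_E k) V E"
  using assms S21_E_in_S21_V S21_E_shift S21_V_Suc_eq
  by (intro hom_count_le_card_mult_hom_count_delete_vertex[where sig = S21_shift and v = 2])
    (auto simp: S21_V_def)

theorem theorem3p1:
  fixes m :: nat and V :: "'a set" and E :: "'a \<Rightarrow> 'a \<Rightarrow> bool"
  assumes "m \<ge> 2" and "graph V E"
  shows "hom_count S0_V S0_E V E * hom_count (S21_V (m - 2)) (S21_E (m - 2)) V E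
           \<ge> hom_count (S21_V (m - 1)) (S21_E (m - 1)) V E"
proof -
  have "finite V" using assms(2) by (simp add: graph_def)
  moreover have "m - 1 = Suc (m - 2)" using assms(1) by simp
  ultimately show ?thesis
    using hom_count_S21_Suc_le[of V "m - 2" E] by (simp add: hom_count_S0)
qed

end
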